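(* Let $Z=(Z_i)_{i=1}^n$ be a stationary ergodic Markov chain on a finite state space $\mathcal S$ with equilibrium distribution $\pi$, and let $\pi_{\min}:=\min_{x\in\mathcal S}\pi_x$. Then $$\Psi(Z)\le\Bigl(\log_2\frac1{\pi_{\min}}+3\Bigr)t_{\mathrm{mix}}.$$
   Context: $\psi(V\mid W):=\sup\bigl|\frac{\mathbb P(A\cap B)-\mathbb P(A)\mathbb P(B)}{\mathbb P(A)\mathbb P(B)}\bigr|$ over $A\in\sigma(V),B\in\sigma(W)$ with positive probability; $\Psi(Z):=\min\{j\ge1:\psi(Z_{i+j}\mid Z_i)\le1/4\text{ for all }i\in\{1,\dots,n-j\}\}$. Total variation distance $d_{TV}(\mu,\nu):=\max_{A\subseteq\mathcal S}|\mu(A)-\nu(A)|$; $d(t):=\sup_{i\in\mathcal S}d_{TV}(\mathbb P(Z_t=\cdot\mid Z_0=i),\pi)$ (for the chain with the given transition matrix); $t_{\mathrm{mix}}:=\min\{t\ge1:d(t)\le1/4\}$. *)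

theory Defs
  imports "HOL-Probability.Probability"
begin

definition stochastic_matrix :: "'s set \<Rightarrow> ('s \<Rightarrow> 's \<Rightarrow> real) \<Rightarrow> bool" where
  "stochastic_matrix S P \<longleftrightarrow>
     (\<forall>x\<in>S. \<forall>y\<in>S. 0 \<le> P x y) \<and> (\<forall>x\<in>S. (\<Sum>y\<in>S. P x y) = 1)"

fun mpow :: "'s set \<Rightarrow> ('s \<Rightarrow> 's \<Rightarrow> real) \<Rightarrow> nat \<Rightarrow> 's \<Rightarrow> 's \<Rightarrow> real" where
  "mpow S P 0 x y = (if x = y then 1 else 0)"
| "mpow S P (Suc t) x y = (\<Sum>z\<in>S. mpow S P t x z * P z y)"

definition irreducible_chain :: "'s set \<Rightarrow> ('s \<Rightarrow> 's \<Rightarrow> real) \<Rightarrow> bool" where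
  "irreducible_chain S P \<longleftrightarrow> (\<forall>x\<in>S. \<forall>y\<in>S. \<exists>t. mpow S P t x y > 0)"

definition aperiodic_chain :: "'s set \<Rightarrow> ('s \<Rightarrow> 's \<Rightarrow> real) \<Rightarrow> bool" where
  "aperiodic_chain S P \<longleftrightarrow> (\<forall>x\<in>S. Gcd {t. t \<ge> 1 \<and> mpow S P t x x > 0} = 1)"

definition ergodic_chain :: "'s set \<Rightarrow> ('s \<Rightarrow> 's \<Rightarrow> real) \<Rightarrow> bool" where
  "ergodic_chain S P \<longleftrightarrow> irreducible_chain S P \<and> aperiodic_chain S P"

definition stationary_distribution :: "'s set \<Rightarrow> ('s \<Rightarrow> 's \<Rightarrow> real) \<Rightarrow> ('s \<Rightarrow> real) \<Rightarrow> bool" where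
  "stationary_distribution S P \<pi> \<longleftrightarrow>
     (\<forall>x\<in>S. 0 \<le> \<pi> x) \<and> (\<Sum>x\<in>S. \<pi> x) = 1 \<and>
     (\<forall>y\<in>S. (\<Sum>x\<in>S. \<pi> x * P x y) = \<pi> y)"

definition dTV :: "'s set \<Rightarrow> ('s \<Rightarrow> real) \<Rightarrow> ('s \<Rightarrow> real) \<Rightarrow> real" where
  "dTV S \<mu> \<nu> = Max {\<bar>(\<Sum>x\<in>A. \<mu> x) - (\<Sum>x\<in>A. \<nu> x)\<bar> | A. A \<subseteq> S}"

definition dist_eq :: "'s set \<Rightarrow> ('s \<Rightarrow> 's \<Rightarrow> real) \<Rightarrow> ('s \<Rightarrow> real) \<Rightarrow> nat \<Rightarrow> real" where
  "dist_eq S P \<pi> t = Sup ((\<lambda>i. dTV S (mpow S P t i) \<pi>) ` S)"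

definition t_mix :: "'s set \<Rightarrow> ('s \<Rightarrow> 's \<Rightarrow> real) \<Rightarrow> ('s \<Rightarrow> real) \<Rightarrow> nat" where
  "t_mix S P \<pi> = (LEAST t. t \<ge> 1 \<and> dist_eq S P \<pi> t \<le> 1/4)"

text \<open>Z i (1 <= i <= n) are random variables with values in S on the probability space M,
  whose finite-dimensional distributions are those of the Markov chain with transition
  matrix P started in pi (hence stationary when pi is stationary).\<close>
definition markov_chain_rvs ::
  "'a measure \<Rightarrow> 's set \<Rightarrow> ('s \<Rightarrow> 's \<Rightarrow> real) \<Rightarrow> ('s \<Rightarrow> real) \<Rightarrow> nat \<Rightarrow> (nat \<Rightarrow> 'a \<Rightarrow> 's) \<Rightarrow> bool" where
  "markov_chain_rvs M S P \<pi> n Z \<longleftrightarrow>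
     prob_space M \<and>
     (\<forall>i\<in>{1..n}. Z i \<in> measurable M (count_space S)) \<and>
     (\<forall>k\<in>{1..n}. \<forall>x. (\<forall>i\<in>{1..k}. x i \<in> S) \<longrightarrow>
        measure M {\<omega>\<in>space M. \<forall>i\<in>{1..k}. Z i \<omega> = x i}
          = \<pi> (x 1) * (\<Prod>i\<in>{1..<k}. P (x i) (x (Suc i))))"

text \<open>sigma(V) for V : M -> S (with the discrete sigma-algebra on S) is the sigma-algebra
  of vimage_algebra (space M) V (count_space S).\<close>
definition psi_coeff :: "'a measure \<Rightarrow> 's set \<Rightarrow> ('a \<Rightarrow> 's) \<Rightarrow> ('a \<Rightarrow> 's) \<Rightarrow> real" where
  "psi_coeff M S V W = Sup {\<bar>(measure M (A \<inter> B) - measure M A * measure M B)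
                              / (measure M A * measure M B)\<bar> | A B.
      A \<in> sets (vimage_algebra (space M) V (count_space S)) \<and>
      B \<in> sets (vimage_algebra (space M) W (count_space S)) \<and>
      measure M A > 0 \<and> measure M B > 0}"

definition Psi_coeff :: "'a measure \<Rightarrow> 's set \<Rightarrow> nat \<Rightarrow> (nat \<Rightarrow> 'a \<Rightarrow> 's) \<Rightarrow> nat" where
  "Psi_coeff M S n Z = (LEAST j. j \<ge> 1 \<and>
      (\<forall>i\<in>{1..n-j}. psi_coeff M S (Z (i+j)) (Z i) \<le> 1/4))"

end

theory Submission
  imports Defs
begin

text \<open>
  Let T be the mixing time. After T steps any two rows of the transition matrix are at
  l1-distance at most 1, and averaging rows against a signed weight of total mass zero contracts
  l1-distance by half the largest distance between two rows (Dobrushin). Hence after j = k T steps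
  |P^j(x,y) - pi(y)| <= 2^-k for all states x, y, which is at most pi(y)/4 once
  k = ceil(log2(1/pi_min) + 2). As the stationary chain satisfies
  Pr(Z_i in B, Z_(i+j) in A) = sum over x in B, y in A of pi(x) P^j(x,y), the joint law of
  (Z_i, Z_(i+j)) then differs from the product of its marginals by at most a factor 1/4 on every
  rectangle, so psi(Z_(i+j) | Z_i) <= 1/4. Ergodicity is used only to show that the mixing time
  exists (some power of P is entrywise positive, giving a Doeblin condition) and that pi_min > 0.
\<close>

section \<open>Matrix powers\<close>

lemma mpow_nonneg:
  assumes "stochastic_matrix S P" "y \<in> S"
  shows "0 \<le> mpow S P t x y"
  using assms(2)
proof (induction t arbitrary: y)
  case (Suc t)
  have "0 \<le> mpow S P t x z * P z y" if "z \<in> S" for z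
    using Suc that assms(1) unfolding stochastic_matrix_def by auto
  then show ?case by (simp add: sum_nonneg)
qed simp

lemma mpow_row_sum:
  assumes "finite S" "stochastic_matrix S P" "x \<in> S"
  shows "(\<Sum>y\<in>S. mpow S P t x y) = 1"
proof (induction t)
  case 0
  then show ?case using assms by (simp add: sum.delta)
next
  case (Suc t)
  have "(\<Sum>y\<in>S. mpow S P (Suc t) x y) = (\<Sum>z\<in>S. mpow S P t x z * (\<Sum>y\<in>S. P z y))"
    by (simp add: sum_distrib_left) (rule sum.swap)
  also have "\<dots> = (\<Sum>z\<in>S. mpow S P t x z)"
    using assms(2) unfolding stochastic_matrix_def by simp
  finally show ?case using Suc by simp
qed

lemma mpow_add:
  assumes "finite S" "y \<in> S"
  shows "mpow S P (s + t) x y = (\<Sum>z\<in>S. mpow S P s x z * mpow S P t z y)"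
  using assms(2)
proof (induction t arbitrary: y)
  case 0
  then show ?case using assms(1) by (simp add: if_distrib sum.delta' cong: if_cong)
next
  case (Suc t)
  have "mpow S P (s + Suc t) x y = (\<Sum>w\<in>S. (\<Sum>z\<in>S. mpow S P s x z * mpow S P t z w) * P w y)"
    using Suc by (auto intro: sum.cong)
  also have "\<dots> = (\<Sum>z\<in>S. mpow S P s x z * (\<Sum>w\<in>S. mpow S P t z w * P w y))"
    by (simp add: sum_distrib_left sum_distrib_right mult.assoc) (rule sum.swap)
  finally show ?case by simp
qed

lemma mpow_mult_le_mpow_add:
  assumes "finite S" "stochastic_matrix S P" "y \<in> S" "z \<in> S"
  shows "mpow S P s x z * mpow S P t z y \<le> mpow S P (s + t) x y"
proof -
  have "mpow S P s x z * mpow S P t z y \<le> (\<Sum>w\<in>S. mpow S P s x w * mpow S P t w y)"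
    using assms mpow_nonneg[OF assms(2)] by (intro member_le_sum) auto
  with mpow_add[OF assms(1,3)] show ?thesis by simp
qed

lemma stationary_mpow:
  assumes "finite S" "stationary_distribution S P \<pi>" "y \<in> S"
  shows "(\<Sum>x\<in>S. \<pi> x * mpow S P t x y) = \<pi> y"
  using assms(3)
proof (induction t arbitrary: y)
  case 0
  then show ?case using assms(1) by (simp add: if_distrib sum.delta cong: if_cong)
next
  case (Suc t)
  have "(\<Sum>x\<in>S. \<pi> x * mpow S P (Suc t) x y) = (\<Sum>z\<in>S. (\<Sum>x\<in>S. \<pi> x * mpow S P t x z) * P z y)"
    by (simp add: sum_distrib_left sum_distrib_right mult.assoc mult.left_commute) (rule sum.swap)
  also have "\<dots> = (\<Sum>z\<in>S. \<pi> z * P z y)"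
    using Suc by (intro sum.cong) auto
  also have "\<dots> = \<pi> y"
    using assms(2) Suc unfolding stationary_distribution_def by auto
  finally show ?case .
qed

lemma stationary_distribution_pos:
  assumes "finite S" "stochastic_matrix S P" "irreducible_chain S P"
    and sd: "stationary_distribution S P \<pi>" and "y \<in> S"
  shows "0 < \<pi> y"
proof -
  have nonneg: "\<And>x. x \<in> S \<Longrightarrow> 0 \<le> \<pi> x" and "(\<Sum>x\<in>S. \<pi> x) = 1"
    using sd unfolding stationary_distribution_def by auto
  then obtain x where x: "x \<in> S" "\<pi> x \<noteq> 0"
    by (metis sum.neutral zero_neq_one)
  obtain t where t: "0 < mpow S P t x y"
    using assms x unfolding irreducible_chain_def by blast
  have "0 < \<pi> x * mpow S P t x y"
    using t x nonneg by (simp add: order_le_neq_trans)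
  also have "\<dots> \<le> (\<Sum>x'\<in>S. \<pi> x' * mpow S P t x' y)"
    using assms x nonneg mpow_nonneg[OF assms(2,5)] by (intro member_le_sum) auto
  also have "\<dots> = \<pi> y"
    by (rule stationary_mpow) fact+
  finally show ?thesis .
qed

section \<open>Total variation and \<open>\<ell>\<^sub>1\<close>-distance\<close>

definition l1_dist :: "'s set \<Rightarrow> ('s \<Rightarrow> real) \<Rightarrow> ('s \<Rightarrow> real) \<Rightarrow> real" where
  "l1_dist S f g = (\<Sum>y\<in>S. \<bar>f y - g y\<bar>)"

lemma l1_dist_commute: "l1_dist S f g = l1_dist S g f"
  unfolding l1_dist_def by (simp add: abs_minus_commute)

lemma l1_dist_triangle: "l1_dist S f h \<le> l1_dist S f g + l1_dist S g h"
  unfolding l1_dist_def sum.distrib[symmetric] by (intro sum_mono) simp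

lemma l1_dist_cong:
  assumes "\<And>y. y \<in> S \<Longrightarrow> f y = f' y" "\<And>y. y \<in> S \<Longrightarrow> g y = g' y"
  shows "l1_dist S f g = l1_dist S f' g'"
  unfolding l1_dist_def using assms by (intro sum.cong) auto

context
  fixes S :: "'s set" and f g :: "'s \<Rightarrow> real"
  assumes fin: "finite S" and same_mass: "(\<Sum>y\<in>S. f y) = (\<Sum>y\<in>S. g y)"
begin

lemma sum_neg_part_eq_sum_pos_part:
  "(\<Sum>y\<in>S. max (g y - f y) 0) = (\<Sum>y\<in>S. max (f y - g y) 0)"
proof -
  have "(\<Sum>y\<in>S. max (f y - g y) 0 - max (g y - f y) 0) = (\<Sum>y\<in>S. f y - g y)"
    by (intro sum.cong) (auto simp: max_def)
  also have "\<dots> = 0"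
    using same_mass by (simp add: sum_subtractf)
  finally show ?thesis by (simp add: sum_subtractf)
qed

lemma l1_dist_eq_twice_sum_pos_part:
  "l1_dist S f g = 2 * (\<Sum>y\<in>S. max (f y - g y) 0)"
proof -
  have "\<bar>f y - g y\<bar> = max (f y - g y) 0 + max (g y - f y) 0" for y
    by (simp add: max_def)
  then show ?thesis
    unfolding l1_dist_def by (simp only: sum.distrib sum_neg_part_eq_sum_pos_part)
qed

lemma abs_diff_le_half_l1_dist:
  assumes "y \<in> S"
  shows "\<bar>f y - g y\<bar> \<le> l1_dist S f g / 2"
proof -
  have "max (f y - g y) 0 \<le> (\<Sum>y\<in>S. max (f y - g y) 0)"
       "max (g y - f y) 0 \<le> (\<Sum>y\<in>S. max (g y - f y) 0)"
    by (rule member_le_sum; use fin assms in auto)+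
  then show ?thesis
    using sum_neg_part_eq_sum_pos_part l1_dist_eq_twice_sum_pos_part by (simp add: abs_if)
qed

lemma dTV_eq_half_l1_dist: "dTV S f g = l1_dist S f g / 2"
proof -
  let ?D = "\<lambda>A. \<bar>(\<Sum>x\<in>A. f x) - (\<Sum>x\<in>A. g x)\<bar>"
  let ?pos = "\<lambda>A. \<Sum>x\<in>A. max (f x - g x) 0" and ?neg = "\<lambda>A. \<Sum>x\<in>A. max (g x - f x) 0"
  have diff_eq: "(\<Sum>x\<in>A. f x) - (\<Sum>x\<in>A. g x) = ?pos A - ?neg A" for A
    by (simp add: sum_subtractf[symmetric]) (intro sum.cong, auto simp: max_def)
  have upper: "?D A \<le> l1_dist S f g / 2" if "A \<subseteq> S" for A
  proof -
    have "?pos A \<le> ?pos S" "?neg A \<le> ?neg S" "0 \<le> ?pos A" "0 \<le> ?neg A"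
      using that fin by (auto intro: sum_mono2 sum_nonneg)
    then show ?thesis
      unfolding diff_eq using sum_neg_part_eq_sum_pos_part l1_dist_eq_twice_sum_pos_part
      by linarith
  qed
  define A where "A = {y\<in>S. g y \<le> f y}"
  have "?pos S = ?pos A"
    unfolding A_def by (rule sum.mono_neutral_right) (use fin in auto)
  also have "\<dots> = ?D A"
    unfolding diff_eq by (auto simp: A_def intro!: sum_nonneg abs_of_nonneg[symmetric])
  finally have attained: "?D A = l1_dist S f g / 2"
    using l1_dist_eq_twice_sum_pos_part by simp
  have "Max {?D A | A. A \<subseteq> S} = l1_dist S f g / 2"
    by (rule Max_eqI) (use fin upper attained[symmetric] in \<open>auto simp: A_def\<close>)
  then show ?thesis
    unfolding dTV_def .
qed

end

section \<open>Contraction of the transition matrix\<close>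

lemma sum_mix_diff_eq:
  fixes p m q :: "'s \<Rightarrow> real"
  assumes "(\<Sum>z\<in>S. m z) = (\<Sum>z\<in>S. p z)"
  shows "(\<Sum>z\<in>S. p z) * ((\<Sum>z\<in>S. p z * q z) - (\<Sum>z\<in>S. m z * q z))
           = (\<Sum>z\<in>S. \<Sum>z'\<in>S. p z * m z' * (q z - q z'))"
proof -
  have "(\<Sum>z\<in>S. \<Sum>z'\<in>S. p z * m z' * (q z - q z'))
          = (\<Sum>z\<in>S. p z * q z) * (\<Sum>z'\<in>S. m z') - (\<Sum>z\<in>S. p z) * (\<Sum>z'\<in>S. m z' * q z')"
    by (simp add: sum_subtractf right_diff_distrib sum_distrib_left sum_distrib_right algebra_simps)
       (subst sum.swap, simp)
  then show ?thesis
    using assms by (simp add: algebra_simps)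
qed

lemma l1_dist_mix_scaled_le:
  fixes p m :: "'s \<Rightarrow> real"
  assumes nonneg: "\<And>z. z \<in> S \<Longrightarrow> 0 \<le> p z" "\<And>z. z \<in> S \<Longrightarrow> 0 \<le> m z"
    and same_mass: "(\<Sum>z\<in>S. m z) = (\<Sum>z\<in>S. p z)"
    and rows: "\<And>z z'. z \<in> S \<Longrightarrow> z' \<in> S \<Longrightarrow> l1_dist S (q z) (q z') \<le> 2 * b"
  shows "(\<Sum>z\<in>S. p z) * l1_dist S (\<lambda>y. \<Sum>z\<in>S. p z * q z y) (\<lambda>y. \<Sum>z\<in>S. m z * q z y)
           \<le> 2 * b * (\<Sum>z\<in>S. p z)\<^sup>2"
proof -
  define c where "c = (\<Sum>z\<in>S. p z)"
  have "0 \<le> c"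
    unfolding c_def using nonneg by (simp add: sum_nonneg)
  have "c * l1_dist S (\<lambda>y. \<Sum>z\<in>S. p z * q z y) (\<lambda>y. \<Sum>z\<in>S. m z * q z y)
      = (\<Sum>y\<in>S. \<bar>\<Sum>z\<in>S. \<Sum>z'\<in>S. p z * m z' * (q z y - q z' y)\<bar>)"
  proof -
    have "c * \<bar>(\<Sum>z\<in>S. p z * q z y) - (\<Sum>z\<in>S. m z * q z y)\<bar>
        = \<bar>\<Sum>z\<in>S. \<Sum>z'\<in>S. p z * m z' * (q z y - q z' y)\<bar>" for y
      using sum_mix_diff_eq[where q = "\<lambda>z. q z y", OF same_mass, symmetric] \<open>0 \<le> c\<close>
      by (simp add: c_def abs_mult)
    then show ?thesis
      unfolding l1_dist_def sum_distrib_left by simp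
  qed
  also have "\<dots> \<le> (\<Sum>y\<in>S. \<Sum>z\<in>S. \<Sum>z'\<in>S. p z * m z' * \<bar>q z y - q z' y\<bar>)"
    using nonneg
    by (intro sum_mono order_trans[OF sum_abs] order_trans[OF sum_abs]) (simp add: abs_mult)
  also have "\<dots> = (\<Sum>z\<in>S. \<Sum>z'\<in>S. p z * m z' * l1_dist S (q z) (q z'))"
    unfolding l1_dist_def sum_distrib_left
    by (subst sum.swap, rule sum.cong, simp, subst sum.swap, simp)
  also have "\<dots> \<le> (\<Sum>z\<in>S. \<Sum>z'\<in>S. p z * m z' * (2 * b))"
    using nonneg rows by (intro sum_mono mult_left_mono) auto
  also have "\<dots> = (\<Sum>z\<in>S. \<Sum>z'\<in>S. p z * m z') * (2 * b)"
    by (simp add: sum_distrib_right)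
  also have "\<dots> = 2 * b * c\<^sup>2"
  proof -
    have "(\<Sum>z\<in>S. \<Sum>z'\<in>S. p z * m z') = c * c"
      using same_mass by (simp add: c_def flip: sum_product)
    then show ?thesis
      by (simp add: power2_eq_square)
  qed
  finally show ?thesis
    unfolding c_def .
qed

text \<open>Dobrushin's contraction inequality, proved by coupling the positive and negative parts of
  \<open>f - g\<close>, which have equal mass.\<close>

lemma l1_dist_mix_le:
  assumes fin: "finite S" and same_mass: "(\<Sum>y\<in>S. f y) = (\<Sum>y\<in>S. g y)"
    and rows: "\<And>z z'. z \<in> S \<Longrightarrow> z' \<in> S \<Longrightarrow> l1_dist S (q z) (q z') \<le> 2 * b"
  shows "l1_dist S (\<lambda>y. \<Sum>z\<in>S. f z * q z y) (\<lambda>y. \<Sum>z\<in>S. g z * q z y) \<le> b * l1_dist S f g"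
proof -
  define p where "p z = max (f z - g z) 0" for z
  define m where "m z = max (g z - f z) 0" for z
  define c where "c = (\<Sum>z\<in>S. p z)"
  have m_mass: "(\<Sum>z\<in>S. m z) = c"
    using sum_neg_part_eq_sum_pos_part[OF fin same_mass] by (simp add: p_def m_def c_def)
  have l1_fg: "l1_dist S f g = 2 * c"
    using l1_dist_eq_twice_sum_pos_part[OF fin same_mass] by (simp add: p_def c_def)
  have pm_nonneg: "0 \<le> p z" "0 \<le> m z" for z
    by (auto simp: p_def m_def)
  let ?mix = "\<lambda>h y. \<Sum>z\<in>S. h z * q z y"
  have mix_eq: "l1_dist S (?mix f) (?mix g) = l1_dist S (?mix p) (?mix m)"
    unfolding l1_dist_def
    by (intro sum.cong refl arg_cong[where f = abs])
       (auto simp: sum_subtractf[symmetric] left_diff_distrib[symmetric] p_def m_def max_def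
          intro!: sum.cong)
  have scaled: "c * l1_dist S (?mix p) (?mix m) \<le> 2 * b * c\<^sup>2"
    unfolding c_def using m_mass pm_nonneg rows by (intro l1_dist_mix_scaled_le) (auto simp: c_def)
  show ?thesis
  proof (cases "c = 0")
    case True
    then have "p z = 0" "m z = 0" if "z \<in> S" for z
      using m_mass fin that pm_nonneg unfolding c_def by (auto simp: sum_nonneg_eq_0_iff)
    then have "l1_dist S (?mix p) (?mix m) = 0"
      unfolding l1_dist_def by simp
    then show ?thesis
      using mix_eq l1_fg True by simp
  next
    case False
    moreover have "0 \<le> c"
      unfolding c_def using pm_nonneg by (simp add: sum_nonneg)
    ultimately show ?thesis
      using scaled mix_eq l1_fg by (simp add: power2_eq_square mult_le_cancel_left algebra_simps)
  qed
qed

lemma l1_dist_mpow_rows_le_2: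
  assumes "finite S" "stochastic_matrix S P" "x \<in> S" "x' \<in> S"
  shows "l1_dist S (mpow S P t x) (mpow S P t x') \<le> 2"
proof -
  have "l1_dist S (mpow S P t x) (mpow S P t x') \<le> (\<Sum>y\<in>S. mpow S P t x y + mpow S P t x' y)"
    unfolding l1_dist_def using mpow_nonneg[OF assms(2)] by (intro sum_mono) (smt (verit))
  also have "\<dots> = 2"
    using mpow_row_sum[OF assms(1,2)] assms(3,4) by (simp add: sum.distrib)
  finally show ?thesis .
qed

lemma l1_dist_mpow_rows_mult_le:
  assumes fin: "finite S" and st: "stochastic_matrix S P" and "0 \<le> \<beta>"
    and rows: "\<And>x x'. x \<in> S \<Longrightarrow> x' \<in> S \<Longrightarrow> l1_dist S (mpow S P t x) (mpow S P t x') \<le> 2 * \<beta>"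
    and "x \<in> S" "x' \<in> S"
  shows "l1_dist S (mpow S P (k * t) x) (mpow S P (k * t) x') \<le> 2 * \<beta> ^ k"
  using assms(5,6)
proof (induction k arbitrary: x x')
  case 0
  then show ?case
    using l1_dist_mpow_rows_le_2[OF fin st, of x x' 0] by (simp del: mpow.simps)
next
  case (Suc k)
  let ?mix = "\<lambda>u y. \<Sum>z\<in>S. mpow S P (k * t) u z * mpow S P t z y"
  have "l1_dist S (mpow S P (Suc k * t) x) (mpow S P (Suc k * t) x') = l1_dist S (?mix x) (?mix x')"
    by (rule l1_dist_cong) (simp_all add: add.commute flip: mpow_add[OF fin])
  also have "\<dots> \<le> \<beta> * l1_dist S (mpow S P (k * t) x) (mpow S P (k * t) x')"
    by (rule l1_dist_mix_le[OF fin _ rows]) (use mpow_row_sum[OF fin st] Suc.prems in auto)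
  also have "\<dots> \<le> \<beta> * (2 * \<beta> ^ k)"
    using Suc assms(3) by (intro mult_left_mono) auto
  finally show ?case by simp
qed

lemma l1_dist_mpow_stationary_le:
  assumes fin: "finite S" and sd: "stationary_distribution S P \<pi>"
    and rows: "\<And>x'. x' \<in> S \<Longrightarrow> l1_dist S (mpow S P t x) (mpow S P t x') \<le> e"
  shows "l1_dist S (mpow S P t x) \<pi> \<le> e"
proof -
  have mass: "(\<Sum>x'\<in>S. \<pi> x') = 1" and nonneg: "\<And>x'. x' \<in> S \<Longrightarrow> 0 \<le> \<pi> x'"
    using sd unfolding stationary_distribution_def by auto
  have "\<bar>mpow S P t x y - \<pi> y\<bar> \<le> (\<Sum>x'\<in>S. \<pi> x' * \<bar>mpow S P t x y - mpow S P t x' y\<bar>)"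
    if "y \<in> S" for y
  proof -
    have "mpow S P t x y - \<pi> y = (\<Sum>x'\<in>S. \<pi> x' * (mpow S P t x y - mpow S P t x' y))"
      using stationary_mpow[OF fin sd that, of t] mass
      by (simp add: right_diff_distrib sum_subtractf flip: sum_distrib_right)
    also have "\<bar>\<dots>\<bar> \<le> (\<Sum>x'\<in>S. \<pi> x' * \<bar>mpow S P t x y - mpow S P t x' y\<bar>)"
      using nonneg by (intro order_trans[OF sum_abs] sum_mono) (simp add: abs_mult)
    finally show ?thesis .
  qed
  then have "l1_dist S (mpow S P t x) \<pi> \<le> (\<Sum>y\<in>S. \<Sum>x'\<in>S. \<pi> x' * \<bar>mpow S P t x y - mpow S P t x' y\<bar>)"
    unfolding l1_dist_def by (rule sum_mono)
  also have "\<dots> = (\<Sum>x'\<in>S. \<pi> x' * l1_dist S (mpow S P t x) (mpow S P t x'))"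
    unfolding l1_dist_def sum_distrib_left by (rule sum.swap)
  also have "\<dots> \<le> (\<Sum>x'\<in>S. \<pi> x' * e)"
    using rows nonneg by (intro sum_mono mult_left_mono) auto
  also have "\<dots> = e"
    using mass by (simp flip: sum_distrib_right)
  finally show ?thesis .
qed

lemma dTV_mpow_stationary_eq:
  assumes "finite S" "stochastic_matrix S P" "stationary_distribution S P \<pi>" "x \<in> S"
  shows "dTV S (mpow S P t x) \<pi> = l1_dist S (mpow S P t x) \<pi> / 2"
  using assms mpow_row_sum[OF assms(1,2,4)]
  by (intro dTV_eq_half_l1_dist) (auto simp: stationary_distribution_def)

lemma dTV_le_dist_eq:
  assumes "finite S" "x \<in> S"
  shows "dTV S (mpow S P t x) \<pi> \<le> dist_eq S P \<pi> t"
  unfolding dist_eq_def using assms by (intro cSUP_upper) (auto intro: bdd_above_finite)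

lemma dist_eq_le:
  assumes "S \<noteq> {}" "\<And>x. x \<in> S \<Longrightarrow> dTV S (mpow S P t x) \<pi> \<le> e"
  shows "dist_eq S P \<pi> t \<le> e"
  unfolding dist_eq_def using assms by (intro cSUP_least) auto

lemma l1_dist_mpow_rows_le_1:
  assumes fin: "finite S" and st: "stochastic_matrix S P" and sd: "stationary_distribution S P \<pi>"
    and "dist_eq S P \<pi> t \<le> 1/4" and "x \<in> S" "x' \<in> S"
  shows "l1_dist S (mpow S P t x) (mpow S P t x') \<le> 1"
proof -
  have to_\<pi>: "l1_dist S (mpow S P t z) \<pi> \<le> 1/2" if "z \<in> S" for z
    using dTV_mpow_stationary_eq[OF fin st sd that, where t = t] dTV_le_dist_eq[OF fin that, of P t \<pi>]
      assms(4) by linarith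
  show ?thesis
    using l1_dist_triangle[of S "mpow S P t x" "mpow S P t x'" \<pi>] to_\<pi>[OF assms(5)] to_\<pi>[OF assms(6)]
      l1_dist_commute[of S \<pi> "mpow S P t x'"] by linarith
qed

section \<open>Ergodicity and the mixing time\<close>

lemma add_closed_mult_mem:
  fixes A :: "nat set"
  assumes add: "\<And>a b. a \<in> A \<Longrightarrow> b \<in> A \<Longrightarrow> a + b \<in> A" and "a \<in> A" "1 \<le> k"
  shows "k * a \<in> A"
  using assms(3)
proof (induction k rule: dec_induct)
  case (step k)
  then show ?case using add \<open>a \<in> A\<close> by (simp add: add.commute)
qed (use \<open>a \<in> A\<close> in simp)

lemma add_closed_Gcd_eq_1_consecutive:
  fixes A :: "nat set"
  assumes pos: "\<And>a. a \<in> A \<Longrightarrow> 1 \<le> a"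
    and add: "\<And>a b. a \<in> A \<Longrightarrow> b \<in> A \<Longrightarrow> a + b \<in> A"
    and Gcd: "Gcd A = 1"
  obtains a where "a \<in> A" "a + 1 \<in> A"
proof -
  define D where "D = {d. 0 < d \<and> (\<exists>a\<in>A. a + d \<in> A)}"
  obtain a0 where "a0 \<in> A"
    using Gcd by (metis Gcd_empty ex_in_conv zero_neq_one)
  then have "a0 \<in> D"
    unfolding D_def using add pos by fastforce
  define d where "d = (LEAST d. d \<in> D)"
  have d_min: "\<And>d'. d' \<in> D \<Longrightarrow> d \<le> d'"
    unfolding d_def by (rule Least_le)
  have "d \<in> D"
    unfolding d_def by (rule LeastI) fact
  then obtain a where a: "a \<in> A" "a + d \<in> A" "0 < d"
    unfolding D_def by blast
  have "d = 1"
  proof (rule ccontr)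
    assume "d \<noteq> 1"
    with Gcd obtain c where c: "c \<in> A" "\<not> d dvd c"
      by (metis Gcd_greatest nat_dvd_1_iff_1)
    define q r where "q = c div d" and "r = c mod d"
    have r: "0 < r" "r < d" "c = q * d + r"
      using c(2) a(3) unfolding q_def r_def by (auto simp: dvd_eq_mod_eq_0)
    \<comment> \<open>Two elements of A at distance d - r < d contradict the minimality of d.\<close>
    have big: "(q + 1) * (a + d) \<in> A"
      using add_closed_mult_mem[OF add a(2), of "q + 1"] by simp
    have small: "(q + 1) * a + c \<in> A"
      using add_closed_mult_mem[OF add a(1), of "q + 1"] add c(1) by simp
    have "(q + 1) * (a + d) = ((q + 1) * a + c) + (d - r)"
      using r(2,3) by (simp add: algebra_simps)
    with big have "((q + 1) * a + c) + (d - r) \<in> A"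
      by argo
    moreover have "0 < d - r"
      using r by simp
    ultimately have "d - r \<in> D"
      unfolding D_def using small by blast
    then show False
      using d_min[of "d - r"] r by linarith
  qed
  then show ?thesis
    using a that by blast
qed

lemma add_closed_consecutive_ge:
  fixes A :: "nat set"
  assumes add: "\<And>a b. a \<in> A \<Longrightarrow> b \<in> A \<Longrightarrow> a + b \<in> A"
    and a: "a \<in> A" "a + 1 \<in> A" "1 \<le> a" and m: "a * a \<le> m"
  shows "m \<in> A"
proof -
  define q r where "q = (m - a * a) div a" and "r = (m - a * a) mod a"
  have "r < a"
    unfolding r_def using a(3) by simp
  \<comment> \<open>Write m as (a - r + q) copies of a plus r copies of a + 1.\<close>
  have m_eq: "m = (a - r + q) * a + r * (a + 1)"
  proof -
    have "m - a * a = q * a + r"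
      unfolding q_def r_def by simp
    moreover have "(a - r) * a + r * a = a * a"
      using \<open>r < a\<close> by (metis add_mult_distrib le_add_diff_inverse2 less_imp_le)
    ultimately show ?thesis
      using m by (simp add: add_mult_distrib algebra_simps)
  qed
  have first: "(a - r + q) * a \<in> A"
    using add_closed_mult_mem[OF add a(1), of "a - r + q"] \<open>r < a\<close> by simp
  show ?thesis
  proof (cases "r = 0")
    case False
    then have "r * (a + 1) \<in> A"
      using add_closed_mult_mem[OF add a(2), of r] by simp
    with first show ?thesis
      unfolding m_eq by (rule add)
  qed (use m_eq first in simp)
qed

lemma add_closed_Gcd_eq_1_eventually:
  fixes A :: "nat set"
  assumes "\<And>a. a \<in> A \<Longrightarrow> 1 \<le> a" "\<And>a b. a \<in> A \<Longrightarrow> b \<in> A \<Longrightarrow> a + b \<in> A" "Gcd A = 1"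
  shows "\<forall>\<^sub>F m in sequentially. m \<in> A"
proof -
  obtain a where "a \<in> A" "a + 1 \<in> A"
    using add_closed_Gcd_eq_1_consecutive assms by blast
  then show ?thesis
    unfolding eventually_sequentially
    using add_closed_consecutive_ge[OF assms(2)] assms(1) by blast
qed

lemma aperiodic_eventually_mpow_diag_pos:
  assumes fin: "finite S" and st: "stochastic_matrix S P" and "aperiodic_chain S P" and x: "x \<in> S"
  shows "\<forall>\<^sub>F m in sequentially. 0 < mpow S P m x x"
proof -
  let ?A = "{t. 1 \<le> t \<and> 0 < mpow S P t x x}"
  have "a + b \<in> ?A" if "a \<in> ?A" "b \<in> ?A" for a b
  proof -
    have "0 < mpow S P a x x * mpow S P b x x"
      using that by simp
    also have "\<dots> \<le> mpow S P (a + b) x x"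
      by (rule mpow_mult_le_mpow_add[OF fin st x x])
    finally show ?thesis
      using that by simp
  qed
  moreover have "Gcd ?A = 1"
    using assms unfolding aperiodic_chain_def by blast
  ultimately have "\<forall>\<^sub>F m in sequentially. m \<in> ?A"
    by (intro add_closed_Gcd_eq_1_eventually) auto
  then show ?thesis
    by eventually_elim simp
qed

lemma ergodic_eventually_mpow_pos:
  assumes fin: "finite S" and st: "stochastic_matrix S P" and erg: "ergodic_chain S P"
  shows "\<forall>\<^sub>F m in sequentially. \<forall>x\<in>S. \<forall>y\<in>S. 0 < mpow S P m x y"
proof (intro eventually_ball_finite[OF fin] ballI)
  fix x y assume xy: "x \<in> S" "y \<in> S"
  obtain t where t: "0 < mpow S P t x y"
    using erg xy unfolding ergodic_chain_def irreducible_chain_def by blast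
  obtain N where N: "\<And>m. N \<le> m \<Longrightarrow> 0 < mpow S P m x x"
    using aperiodic_eventually_mpow_diag_pos[OF fin st _ xy(1)] erg
    unfolding ergodic_chain_def eventually_sequentially by blast
  have "0 < mpow S P m x y" if "N + t \<le> m" for m
  proof -
    have "0 < mpow S P (m - t) x x * mpow S P t x y"
      using N t that by simp
    also have "\<dots> \<le> mpow S P (m - t + t) x y"
      by (rule mpow_mult_le_mpow_add[OF fin st xy(2,1)])
    finally show ?thesis
      using that by simp
  qed
  then show "\<forall>\<^sub>F m in sequentially. 0 < mpow S P m x y"
    unfolding eventually_sequentially by blast
qed

lemma l1_dist_mpow_rows_le_doeblin:
  assumes fin: "finite S" and st: "stochastic_matrix S P" and "0 \<le> \<delta>"
    and lower: "\<And>x y. x \<in> S \<Longrightarrow> y \<in> S \<Longrightarrow> \<delta> \<le> mpow S P t x y"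
    and x: "x \<in> S" "x' \<in> S"
  shows "l1_dist S (mpow S P t x) (mpow S P t x') \<le> 2 * (1 - \<delta>)"
proof -
  have "l1_dist S (mpow S P t x) (mpow S P t x') \<le> (\<Sum>y\<in>S. mpow S P t x y + mpow S P t x' y - 2 * \<delta>)"
    unfolding l1_dist_def using lower x by (intro sum_mono) (fastforce simp: abs_le_iff)
  also have "\<dots> = 2 - 2 * \<delta> * card S"
    using mpow_row_sum[OF fin st] x by (simp add: sum.distrib sum_subtractf)
  also have "\<dots> \<le> 2 - 2 * \<delta>"
  proof -
    have "1 \<le> card S"
      using fin x by (metis One_nat_def Suc_leI card_gt_0_iff empty_iff)
    then show ?thesis
      using \<open>0 \<le> \<delta>\<close> by (simp add: mult_le_cancel_left1)
  qed
  finally show ?thesis by simp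
qed

lemma t_mix_exists:
  assumes fin: "finite S" and ne: "S \<noteq> {}" and st: "stochastic_matrix S P"
    and erg: "ergodic_chain S P" and sd: "stationary_distribution S P \<pi>"
  shows "\<exists>t. 1 \<le> t \<and> dist_eq S P \<pi> t \<le> 1/4"
proof -
  obtain N where N: "1 \<le> N" "\<And>x y. x \<in> S \<Longrightarrow> y \<in> S \<Longrightarrow> 0 < mpow S P N x y"
    using eventually_conj[OF ergodic_eventually_mpow_pos[OF fin st erg] eventually_ge_at_top[of 1]]
    unfolding eventually_sequentially by blast
  define \<delta> where "\<delta> = Min ((\<lambda>(x, y). mpow S P N x y) ` (S \<times> S))"
  have \<delta>_pos: "0 < \<delta>"
    unfolding \<delta>_def using N fin ne by (subst Min_gr_iff) auto
  have \<delta>_le: "\<delta> \<le> mpow S P N x y" if "x \<in> S" "y \<in> S" for x y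
    unfolding \<delta>_def using fin that by (intro Min_le) force+
  obtain x0 where "x0 \<in> S"
    using ne by blast
  have "\<delta> \<le> 1"
    using \<delta>_le[OF \<open>x0 \<in> S\<close> \<open>x0 \<in> S\<close>] mpow_row_sum[OF fin st \<open>x0 \<in> S\<close>, of N]
      member_le_sum[OF \<open>x0 \<in> S\<close>, of "mpow S P N x0"] mpow_nonneg[OF st] fin by force
  obtain k where k: "(1 - \<delta>) ^ k < 1/4"
    using real_arch_pow_inv[of "1/4" "1 - \<delta>"] \<delta>_pos by auto
  have "dTV S (mpow S P (k * N) x) \<pi> \<le> (1 - \<delta>) ^ k" if "x \<in> S" for x
  proof -
    have "l1_dist S (mpow S P (k * N) x) (mpow S P (k * N) x') \<le> 2 * (1 - \<delta>) ^ k" if "x' \<in> S" for x'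
      using l1_dist_mpow_rows_mult_le[OF fin st _ l1_dist_mpow_rows_le_doeblin[OF fin st]]
        \<delta>_pos \<open>\<delta> \<le> 1\<close> \<delta>_le \<open>x \<in> S\<close> that by simp
    then have "l1_dist S (mpow S P (k * N) x) \<pi> \<le> 2 * (1 - \<delta>) ^ k"
      by (rule l1_dist_mpow_stationary_le[OF fin sd])
    then show ?thesis
      using dTV_mpow_stationary_eq[OF fin st sd that, where t = "k * N"] by simp
  qed
  then have "dist_eq S P \<pi> (k * N) \<le> (1 - \<delta>) ^ k"
    by (rule dist_eq_le[OF ne])
  moreover have "k \<noteq> 0"
    using k by (cases k) auto
  ultimately show ?thesis
    using k N(1) by (intro exI[of _ "k * N"]) simp
qed

lemma t_mix:
  assumes "finite S" "S \<noteq> {}" "stochastic_matrix S P" "ergodic_chain S P"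
    "stationary_distribution S P \<pi>"
  shows "1 \<le> t_mix S P \<pi>" "dist_eq S P \<pi> (t_mix S P \<pi>) \<le> 1/4"
  using LeastI_ex[OF t_mix_exists[OF assms]] unfolding t_mix_def by auto

lemma mpow_mult_t_mix_close:
  assumes fin: "finite S" "S \<noteq> {}" and st: "stochastic_matrix S P" and "ergodic_chain S P"
    and sd: "stationary_distribution S P \<pi>" and "x \<in> S" "y \<in> S"
  shows "\<bar>mpow S P (k * t_mix S P \<pi>) x y - \<pi> y\<bar> \<le> (1/2) ^ k"
proof -
  let ?t = "k * t_mix S P \<pi>"
  have "l1_dist S (mpow S P ?t x) (mpow S P ?t x') \<le> 2 * (1/2) ^ k" if "x' \<in> S" for x'
    using l1_dist_mpow_rows_mult_le[OF fin(1) st, of "1/2"] l1_dist_mpow_rows_le_1[OF fin(1) st sd]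
      t_mix[OF assms(1-5)] assms(6) that by simp
  then have "l1_dist S (mpow S P ?t x) \<pi> \<le> 2 * (1/2) ^ k"
    by (rule l1_dist_mpow_stationary_le[OF fin(1) sd])
  moreover have "(\<Sum>y\<in>S. mpow S P ?t x y) = (\<Sum>y\<in>S. \<pi> y)"
    using mpow_row_sum[OF fin(1) st \<open>x \<in> S\<close>] sd by (simp add: stationary_distribution_def)
  ultimately show ?thesis
    using abs_diff_le_half_l1_dist[OF fin(1) _ \<open>y \<in> S\<close>] by fastforce
qed

section \<open>Finite-dimensional distributions of the chain\<close>

lemma sum_PiE_insert:
  assumes "a \<notin> F"
  shows "(\<Sum>x\<in>PiE (insert a F) C. h x) = (\<Sum>x\<in>PiE F C. \<Sum>y\<in>C a. h (x(a := y)))"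
proof -
  have "(\<Sum>x\<in>PiE (insert a F) C. h x) = (\<Sum>(y, x)\<in>C a \<times> PiE F C. h (x(a := y)))"
    unfolding PiE_insert_eq by (subst sum.reindex[OF inj_combinator[OF assms]]) (simp add: case_prod_unfold)
  also have "\<dots> = (\<Sum>y\<in>C a. \<Sum>x\<in>PiE F C. h (x(a := y)))"
    by (simp add: sum.cartesian_product)
  also have "\<dots> = (\<Sum>x\<in>PiE F C. \<Sum>y\<in>C a. h (x(a := y)))"
    by (rule sum.swap)
  finally show ?thesis .
qed

definition path_weight :: "('s \<Rightarrow> 's \<Rightarrow> real) \<Rightarrow> ('s \<Rightarrow> real) \<Rightarrow> nat \<Rightarrow> (nat \<Rightarrow> 's) \<Rightarrow> real" where
  "path_weight P \<pi> k x = \<pi> (x 1) * (\<Prod>i\<in>{1..<k}. P (x i) (x (Suc i)))"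

lemma sum_path_weight_1:
  "(\<Sum>x\<in>PiE {1..1} C. path_weight P \<pi> 1 x * g (x 1)) = (\<Sum>y\<in>C 1. \<pi> y * g y)"
proof -
  have "{1..1::nat} = insert 1 {}"
    by auto
  then show ?thesis
    by (simp add: sum_PiE_insert path_weight_def)
qed

lemma sum_path_weight_Suc:
  assumes "1 \<le> k"
  shows "(\<Sum>x\<in>PiE {1..Suc k} C. path_weight P \<pi> (Suc k) x * g (x (Suc k)))
       = (\<Sum>x\<in>PiE {1..k} C. path_weight P \<pi> k x * (\<Sum>y\<in>C (Suc k). P (x k) y * g y))"
proof -
  have extend: "path_weight P \<pi> (Suc k) (x(Suc k := y)) = path_weight P \<pi> k x * P (x k) y" for x y
  proof -
    have "(\<Prod>i\<in>{1..<Suc k}. P ((x(Suc k := y)) i) ((x(Suc k := y)) (Suc i)))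
        = (\<Prod>i\<in>{1..<k}. P ((x(Suc k := y)) i) ((x(Suc k := y)) (Suc i))) * P (x k) y"
      using assms by (subst prod.atLeastLessThan_Suc) auto
    also have "(\<Prod>i\<in>{1..<k}. P ((x(Suc k := y)) i) ((x(Suc k := y)) (Suc i)))
        = (\<Prod>i\<in>{1..<k}. P (x i) (x (Suc i)))"
      by (intro prod.cong) auto
    finally show ?thesis
      unfolding path_weight_def using assms by simp
  qed
  have "{1..Suc k} = insert (Suc k) {1..k}"
    by auto
  then show ?thesis
    by (simp add: sum_PiE_insert extend sum_distrib_left mult.assoc)
qed

context
  fixes S :: "'s set" and P :: "'s \<Rightarrow> 's \<Rightarrow> real" and \<pi> :: "'s \<Rightarrow> real" and C :: "nat \<Rightarrow> 's set"
  assumes fin: "finite S" and C_sub: "\<And>l. C l \<subseteq> S"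
begin

lemma sum_path_weight_stationary:
  assumes sd: "stationary_distribution S P \<pi>" and "1 \<le> k"
    and unconstrained: "\<And>l. 1 \<le> l \<Longrightarrow> l < k \<Longrightarrow> C l = S"
  shows "(\<Sum>x\<in>PiE {1..k} C. path_weight P \<pi> k x * g (x k)) = (\<Sum>y\<in>C k. \<pi> y * g y)"
  using assms(2,3)
proof (induction k arbitrary: g rule: dec_induct)
  case base
  show ?case by (rule sum_path_weight_1)
next
  case (step k)
  have IH: "(\<Sum>x\<in>PiE {1..k} C. path_weight P \<pi> k x * h (x k)) = (\<Sum>z\<in>S. \<pi> z * h z)" for h
    using step.IH[of h] step.prems step.hyps by simp
  have "(\<Sum>x\<in>PiE {1..Suc k} C. path_weight P \<pi> (Suc k) x * g (x (Suc k)))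
      = (\<Sum>z\<in>S. \<pi> z * (\<Sum>y\<in>C (Suc k). P z y * g y))"
    unfolding sum_path_weight_Suc[OF step.hyps(1)] by (rule IH)
  also have "\<dots> = (\<Sum>y\<in>C (Suc k). (\<Sum>z\<in>S. \<pi> z * P z y) * g y)"
    by (simp add: sum_distrib_left sum_distrib_right mult.assoc) (rule sum.swap)
  also have "\<dots> = (\<Sum>y\<in>C (Suc k). \<pi> y * g y)"
    using sd C_sub[of "Suc k"] unfolding stationary_distribution_def by (intro sum.cong) auto
  finally show ?case .
qed

lemma sum_path_weight_gap:
  assumes "1 \<le> i" and unconstrained: "\<And>l. i < l \<Longrightarrow> l \<le> i + m \<Longrightarrow> C l = S"
  shows "(\<Sum>x\<in>PiE {1..i + m} C. path_weight P \<pi> (i + m) x * g (x (i + m)))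
       = (\<Sum>x\<in>PiE {1..i} C. path_weight P \<pi> i x * (\<Sum>y\<in>S. mpow S P m (x i) y * g y))"
  using unconstrained
proof (induction m arbitrary: g)
  case 0
  have "(\<Sum>y\<in>S. mpow S P 0 u y * g y) = g u" if "u \<in> S" for u
  proof -
    have "(\<Sum>y\<in>S. mpow S P 0 u y * g y) = (\<Sum>y\<in>S. if u = y then g y else 0)"
      by (intro sum.cong) auto
    then show ?thesis
      using fin that by simp
  qed
  moreover have "x i \<in> S" if "x \<in> PiE {1..i} C" for x
    using that C_sub \<open>1 \<le> i\<close> by fastforce
  ultimately show ?case
    by (auto intro: sum.cong)
next
  case (Suc m)
  have "(\<Sum>x\<in>PiE {1..i + Suc m} C. path_weight P \<pi> (i + Suc m) x * g (x (i + Suc m)))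
      = (\<Sum>x\<in>PiE {1..i + m} C. path_weight P \<pi> (i + m) x * (\<Sum>y\<in>S. P (x (i + m)) y * g y))"
    using sum_path_weight_Suc[where k = "i + m" and P = P and \<pi> = \<pi> and C = C and g = g]
      \<open>1 \<le> i\<close> Suc.prems[of "Suc (i + m)"] by simp
  also have "\<dots> = (\<Sum>x\<in>PiE {1..i} C. path_weight P \<pi> i x *
                    (\<Sum>z\<in>S. mpow S P m (x i) z * (\<Sum>y\<in>S. P z y * g y)))"
    using Suc by simp
  also have "\<dots> = (\<Sum>x\<in>PiE {1..i} C. path_weight P \<pi> i x * (\<Sum>y\<in>S. mpow S P (Suc m) (x i) y * g y))"
  proof -
    have "(\<Sum>z\<in>S. mpow S P m u z * (\<Sum>y\<in>S. P z y * g y)) = (\<Sum>y\<in>S. mpow S P (Suc m) u y * g y)" for u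
      by (simp add: sum_distrib_left sum_distrib_right mult.assoc) (rule sum.swap)
    then show ?thesis
      by simp
  qed
  finally show ?case .
qed

end

lemma cylinder_eq_UN_paths:
  "{\<omega>\<in>\<Omega>. \<forall>l\<in>I. Z l \<omega> \<in> C l} = (\<Union>x\<in>PiE I C. {\<omega>\<in>\<Omega>. \<forall>l\<in>I. Z l \<omega> = x l})"
proof (intro equalityI subsetI)
  fix \<omega> assume "\<omega> \<in> {\<omega>\<in>\<Omega>. \<forall>l\<in>I. Z l \<omega> \<in> C l}"
  then have "restrict (\<lambda>l. Z l \<omega>) I \<in> PiE I C" "\<omega> \<in> {\<omega>\<in>\<Omega>. \<forall>l\<in>I. Z l \<omega> = restrict (\<lambda>l. Z l \<omega>) I l}"
    by auto
  then show "\<omega> \<in> (\<Union>x\<in>PiE I C. {\<omega>\<in>\<Omega>. \<forall>l\<in>I. Z l \<omega> = x l})"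
    by blast
next
  fix \<omega> assume "\<omega> \<in> (\<Union>x\<in>PiE I C. {\<omega>\<in>\<Omega>. \<forall>l\<in>I. Z l \<omega> = x l})"
  then show "\<omega> \<in> {\<omega>\<in>\<Omega>. \<forall>l\<in>I. Z l \<omega> \<in> C l}"
    by (auto simp: PiE_iff)
qed

lemma disjoint_family_on_paths:
  "disjoint_family_on (\<lambda>x. {\<omega>\<in>\<Omega>. \<forall>l\<in>I. Z l \<omega> = x l}) (PiE I C)"
  unfolding disjoint_family_on_def
proof (intro ballI impI)
  fix x y assume "x \<in> PiE I C" "y \<in> PiE I C" "x \<noteq> y"
  then obtain i where "i \<in> I" "x i \<noteq> y i"
    by (metis PiE_ext)
  then show "{\<omega>\<in>\<Omega>. \<forall>l\<in>I. Z l \<omega> = x l} \<inter> {\<omega>\<in>\<Omega>. \<forall>l\<in>I. Z l \<omega> = y l} = {}"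
    by auto
qed

context
  fixes M :: "'a measure" and S :: "'s set" and P :: "'s \<Rightarrow> 's \<Rightarrow> real" and \<pi> :: "'s \<Rightarrow> real"
    and n :: nat and Z :: "nat \<Rightarrow> 'a \<Rightarrow> 's"
  assumes chain: "markov_chain_rvs M S P \<pi> n Z"
begin

lemma markov_chain_rvs_prob_space: "prob_space M"
  using chain unfolding markov_chain_rvs_def by blast

lemma markov_chain_rvs_measurable: "l \<in> {1..n} \<Longrightarrow> Z l \<in> measurable M (count_space S)"
  using chain unfolding markov_chain_rvs_def by blast

lemma markov_chain_rvs_in_space: "l \<in> {1..n} \<Longrightarrow> \<omega> \<in> space M \<Longrightarrow> Z l \<omega> \<in> S"
  using measurable_space[OF markov_chain_rvs_measurable] by force

lemma markov_chain_rvs_event: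
  assumes "l \<in> {1..n}"
  shows "{\<omega>\<in>space M. Z l \<omega> \<in> A} \<in> sets M"
proof -
  have "Z l -` (A \<inter> S) \<inter> space M \<in> sets M"
    using markov_chain_rvs_measurable[OF assms] by (rule measurable_sets) auto
  moreover have "Z l -` (A \<inter> S) \<inter> space M = {\<omega>\<in>space M. Z l \<omega> \<in> A}"
    using markov_chain_rvs_in_space[OF assms] by auto
  ultimately show ?thesis by simp
qed

lemma measure_markov_chain_path:
  assumes "k \<in> {1..n}" "\<And>i. i \<in> {1..k} \<Longrightarrow> x i \<in> S"
  shows "measure M {\<omega>\<in>space M. \<forall>i\<in>{1..k}. Z i \<omega> = x i} = path_weight P \<pi> k x"
  using chain assms unfolding markov_chain_rvs_def path_weight_def by blast

lemma measure_markov_chain_cylinder: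
  assumes fin: "finite S" and k: "k \<in> {1..n}" and C_sub: "\<And>l. C l \<subseteq> S"
  shows "measure M {\<omega>\<in>space M. \<forall>l\<in>{1..k}. Z l \<omega> \<in> C l} = (\<Sum>x\<in>PiE {1..k} C. path_weight P \<pi> k x)"
proof -
  interpret prob_space M
    by (rule markov_chain_rvs_prob_space)
  define E where "E x = {\<omega>\<in>space M. \<forall>i\<in>{1..k}. Z i \<omega> = x i}" for x
  have E_sets: "E x \<in> sets M" for x
    unfolding E_def
  proof (rule sets.sets_Collect_finite_All)
    show "{\<omega>\<in>space M. Z i \<omega> = x i} \<in> sets M" if "i \<in> {1..k}" for i
      using markov_chain_rvs_event[of i "{x i}"] that k by simp
  qed simp
  have cylinder_eq: "{\<omega>\<in>space M. \<forall>l\<in>{1..k}. Z l \<omega> \<in> C l} = (\<Union>x\<in>PiE {1..k} C. E x)"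
    unfolding E_def by (rule cylinder_eq_UN_paths)
  have "disjoint_family_on E (PiE {1..k} C)"
    unfolding E_def by (rule disjoint_family_on_paths)
  moreover have "finite (PiE {1..k} C)"
    using fin C_sub by (intro finite_PiE) (auto intro: finite_subset)
  ultimately have "measure M (\<Union>x\<in>PiE {1..k} C. E x) = (\<Sum>x\<in>PiE {1..k} C. measure M (E x))"
    using E_sets by (intro measure_finite_Union) (auto simp: emeasure_finite)
  also have "\<dots> = (\<Sum>x\<in>PiE {1..k} C. path_weight P \<pi> k x)"
  proof (intro sum.cong refl)
    fix x assume "x \<in> PiE {1..k} C"
    then have "x i \<in> S" if "i \<in> {1..k}" for i
      using that C_sub by blast
    then show "measure M (E x) = path_weight P \<pi> k x"
      unfolding E_def using k by (rule measure_markov_chain_path[rotated])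
  qed
  finally show ?thesis
    unfolding cylinder_eq .
qed

lemma measure_markov_chain_marginal:
  assumes fin: "finite S" and sd: "stationary_distribution S P \<pi>" and k: "k \<in> {1..n}" and "A \<subseteq> S"
  shows "measure M {\<omega>\<in>space M. Z k \<omega> \<in> A} = (\<Sum>y\<in>A. \<pi> y)"
proof -
  define C where "C l = (if l = k then A else S)" for l
  have C_sub: "C l \<subseteq> S" for l
    using assms unfolding C_def by auto
  have "{\<omega>\<in>space M. Z k \<omega> \<in> A} = {\<omega>\<in>space M. \<forall>l\<in>{1..k}. Z l \<omega> \<in> C l}"
    using k markov_chain_rvs_in_space by (auto simp: C_def)
  also have "measure M \<dots> = (\<Sum>x\<in>PiE {1..k} C. path_weight P \<pi> k x * (\<lambda>_. 1) (x k))"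
    using measure_markov_chain_cylinder[OF fin k C_sub] by simp
  also have "\<dots> = (\<Sum>y\<in>C k. \<pi> y * 1)"
    using k by (intro sum_path_weight_stationary[OF fin C_sub sd]) (auto simp: C_def)
  finally show ?thesis
    by (simp add: C_def)
qed

lemma measure_markov_chain_joint:
  assumes fin: "finite S" and sd: "stationary_distribution S P \<pi>"
    and "1 \<le> i" "1 \<le> j" "i + j \<le> n" and "A \<subseteq> S" "B \<subseteq> S"
  shows "measure M {\<omega>\<in>space M. Z i \<omega> \<in> A \<and> Z (i + j) \<omega> \<in> B}
       = (\<Sum>x\<in>A. \<pi> x * (\<Sum>y\<in>B. mpow S P j x y))"
proof -
  obtain j' where j': "j = Suc j'"
    using \<open>1 \<le> j\<close> by (cases j) auto
  define C where "C l = (if l = i then A else if l = i + j then B else S)" for l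
  have C_sub: "C l \<subseteq> S" for l
    using assms unfolding C_def by auto
  have "{\<omega>\<in>space M. Z i \<omega> \<in> A \<and> Z (i + j) \<omega> \<in> B}
      = {\<omega>\<in>space M. \<forall>l\<in>{1..i + j}. Z l \<omega> \<in> C l}"
  proof (intro Collect_cong conj_cong refl)
    fix \<omega> assume "\<omega> \<in> space M"
    then have "Z l \<omega> \<in> S" if "l \<in> {1..i + j}" for l
      using markov_chain_rvs_in_space that assms(5) by auto
    then show "(Z i \<omega> \<in> A \<and> Z (i + j) \<omega> \<in> B) = (\<forall>l\<in>{1..i + j}. Z l \<omega> \<in> C l)"
      using assms(3,4) unfolding C_def by auto
  qed
  also have "measure M \<dots>
      = (\<Sum>x\<in>PiE {1..Suc (i + j')} C. path_weight P \<pi> (Suc (i + j')) x * (\<lambda>_. 1) (x (Suc (i + j'))))"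
    using measure_markov_chain_cylinder[OF fin _ C_sub, of "i + j"] assms j' by simp
  also have "\<dots>
      = (\<Sum>x\<in>PiE {1..i + j'} C. path_weight P \<pi> (i + j') x * (\<lambda>z. \<Sum>y\<in>B. P z y) (x (i + j')))"
    using \<open>1 \<le> i\<close> j' by (subst sum_path_weight_Suc) (auto simp: C_def)
  also have "\<dots>
      = (\<Sum>x\<in>PiE {1..i} C. path_weight P \<pi> i x * (\<Sum>z\<in>S. mpow S P j' (x i) z * (\<Sum>y\<in>B. P z y)))"
    using \<open>1 \<le> i\<close> j' by (intro sum_path_weight_gap[OF fin C_sub]) (auto simp: C_def)
  also have "\<dots>
      = (\<Sum>x\<in>PiE {1..i} C. path_weight P \<pi> i x * (\<lambda>u. \<Sum>y\<in>B. mpow S P j u y) (x i))"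
  proof -
    have "(\<Sum>z\<in>S. mpow S P j' u z * (\<Sum>y\<in>B. P z y)) = (\<Sum>y\<in>B. mpow S P j u y)" for u
      unfolding j' by (simp add: sum_distrib_left) (rule sum.swap)
    then show ?thesis
      by simp
  qed
  also have "\<dots> = (\<Sum>x\<in>C i. \<pi> x * (\<Sum>y\<in>B. mpow S P j x y))"
    using \<open>1 \<le> i\<close> by (intro sum_path_weight_stationary[OF fin C_sub sd]) (auto simp: C_def)
  finally show ?thesis
    by (simp add: C_def)
qed

end

section \<open>\<open>\<psi>\<close>-mixing\<close>

lemma sets_vimage_algebra_count_spaceE:
  assumes "U \<in> measurable M (count_space S)" "A \<in> sets (vimage_algebra (space M) U (count_space S))"
  obtains A' where "A' \<subseteq> S" "A = {\<omega>\<in>space M. U \<omega> \<in> A'}"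
proof -
  have "U \<in> space M \<rightarrow> space (count_space S)"
    using measurable_space[OF assms(1)] by blast
  then obtain A' where "A' \<subseteq> S" "A = U -` A' \<inter> space M"
    using assms(2) by (auto simp: sets_vimage_algebra2)
  then show ?thesis
    using that by blast
qed

lemma psi_coeff_le:
  assumes "prob_space M"
    and V: "V \<in> measurable M (count_space S)" and W: "W \<in> measurable M (count_space S)"
    and bound: "\<And>A B. A \<subseteq> S \<Longrightarrow> B \<subseteq> S \<Longrightarrow>
      \<bar>measure M {\<omega>\<in>space M. V \<omega> \<in> A \<and> W \<omega> \<in> B}
         - measure M {\<omega>\<in>space M. V \<omega> \<in> A} * measure M {\<omega>\<in>space M. W \<omega> \<in> B}\<bar>
        \<le> c * (measure M {\<omega>\<in>space M. V \<omega> \<in> A} * measure M {\<omega>\<in>space M. W \<omega> \<in> B})"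
  shows "psi_coeff M S V W \<le> c"
proof -
  let ?X = "{\<bar>(measure M (A \<inter> B) - measure M A * measure M B) / (measure M A * measure M B)\<bar> | A B.
      A \<in> sets (vimage_algebra (space M) V (count_space S)) \<and>
      B \<in> sets (vimage_algebra (space M) W (count_space S)) \<and>
      measure M A > 0 \<and> measure M B > 0}"
  have "measure M (space M) = 1"
    using \<open>prob_space M\<close> by (simp add: prob_space.prob_space)
  then have "?X \<noteq> {}"
    using sets_vimage_algebra_space by fastforce
  moreover have "v \<le> c" if v_mem: "v \<in> ?X" for v
  proof -
    obtain A B where v: "v = \<bar>(measure M (A \<inter> B) - measure M A * measure M B) / (measure M A * measure M B)\<bar>"
      and A: "A \<in> sets (vimage_algebra (space M) V (count_space S))"
      and B: "B \<in> sets (vimage_algebra (space M) W (count_space S))"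
      and pos: "0 < measure M A" "0 < measure M B"
      using v_mem by blast
    obtain A' where "A' \<subseteq> S" and A_eq: "A = {\<omega>\<in>space M. V \<omega> \<in> A'}"
      using V A by (rule sets_vimage_algebra_count_spaceE)
    obtain B' where "B' \<subseteq> S" and B_eq: "B = {\<omega>\<in>space M. W \<omega> \<in> B'}"
      using W B by (rule sets_vimage_algebra_count_spaceE)
    have AB_eq: "A \<inter> B = {\<omega>\<in>space M. V \<omega> \<in> A' \<and> W \<omega> \<in> B'}"
      unfolding A_eq B_eq by blast
    have "\<bar>measure M (A \<inter> B) - measure M A * measure M B\<bar> \<le> c * (measure M A * measure M B)"
      unfolding AB_eq unfolding A_eq B_eq by (rule bound) fact+
    moreover have prod_pos: "0 < measure M A * measure M B"
      using pos by simp
    moreover have "v = \<bar>measure M (A \<inter> B) - measure M A * measure M B\<bar> / (measure M A * measure M B)"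
      unfolding v abs_divide using prod_pos by simp
    ultimately show ?thesis
      by (simp only: pos_divide_le_eq)
  qed
  ultimately show ?thesis
    unfolding psi_coeff_def by (rule cSup_least)
qed

lemma sum_deviation_from_product_le:
  fixes \<pi> :: "'s \<Rightarrow> real"
  assumes close: "\<And>x y. x \<in> A \<Longrightarrow> y \<in> B \<Longrightarrow> \<bar>Q x y - \<pi> y\<bar> \<le> e * \<pi> y"
    and nonneg: "\<And>x. x \<in> A \<Longrightarrow> 0 \<le> \<pi> x"
  shows "\<bar>(\<Sum>x\<in>A. \<pi> x * (\<Sum>y\<in>B. Q x y)) - (\<Sum>x\<in>A. \<pi> x) * (\<Sum>y\<in>B. \<pi> y)\<bar>
           \<le> e * ((\<Sum>x\<in>A. \<pi> x) * (\<Sum>y\<in>B. \<pi> y))"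
proof -
  have "(\<Sum>x\<in>A. \<pi> x * (\<Sum>y\<in>B. Q x y)) - (\<Sum>x\<in>A. \<pi> x) * (\<Sum>y\<in>B. \<pi> y)
      = (\<Sum>x\<in>A. \<pi> x * (\<Sum>y\<in>B. Q x y - \<pi> y))"
    by (simp add: sum_subtractf right_diff_distrib sum_distrib_right)
  also have "\<bar>\<dots>\<bar> \<le> (\<Sum>x\<in>A. \<pi> x * (\<Sum>y\<in>B. \<bar>Q x y - \<pi> y\<bar>))"
    using nonneg by (intro order_trans[OF sum_abs] sum_mono) (simp add: abs_mult mult_left_mono sum_abs)
  also have "\<dots> \<le> (\<Sum>x\<in>A. \<pi> x * (\<Sum>y\<in>B. e * \<pi> y))"
    using nonneg close by (intro sum_mono mult_left_mono) auto
  also have "\<dots> = (\<Sum>x\<in>A. \<pi> x) * (e * (\<Sum>y\<in>B. \<pi> y))"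
    by (simp only: sum_distrib_left[symmetric] sum_distrib_right[symmetric])
  also have "\<dots> = e * ((\<Sum>x\<in>A. \<pi> x) * (\<Sum>y\<in>B. \<pi> y))"
    by (rule mult.left_commute)
  finally show ?thesis .
qed

lemma psi_coeff_markov_chain_le:
  assumes chain: "markov_chain_rvs M S P \<pi> n Z" and fin: "finite S"
    and sd: "stationary_distribution S P \<pi>" and "1 \<le> i" "1 \<le> j" "i + j \<le> n"
    and close: "\<And>x y. x \<in> S \<Longrightarrow> y \<in> S \<Longrightarrow> \<bar>mpow S P j x y - \<pi> y\<bar> \<le> e * \<pi> y"
  shows "psi_coeff M S (Z (i + j)) (Z i) \<le> e"
proof (rule psi_coeff_le)
  show "prob_space M"
    by (rule markov_chain_rvs_prob_space[OF chain])
  show "Z (i + j) \<in> measurable M (count_space S)" "Z i \<in> measurable M (count_space S)"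
    using assms(4-6) markov_chain_rvs_measurable[OF chain] by simp_all
  fix A B assume "A \<subseteq> S" "B \<subseteq> S"
  have "{\<omega>\<in>space M. Z (i + j) \<omega> \<in> A \<and> Z i \<omega> \<in> B} = {\<omega>\<in>space M. Z i \<omega> \<in> B \<and> Z (i + j) \<omega> \<in> A}"
    by blast
  also have "measure M \<dots> = (\<Sum>x\<in>B. \<pi> x * (\<Sum>y\<in>A. mpow S P j x y))"
    by (rule measure_markov_chain_joint[OF chain fin sd]) fact+
  finally have joint: "measure M {\<omega>\<in>space M. Z (i + j) \<omega> \<in> A \<and> Z i \<omega> \<in> B}
      = (\<Sum>x\<in>B. \<pi> x * (\<Sum>y\<in>A. mpow S P j x y))" .
  have marginal: "measure M {\<omega>\<in>space M. Z (i + j) \<omega> \<in> A} = (\<Sum>y\<in>A. \<pi> y)"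
      "measure M {\<omega>\<in>space M. Z i \<omega> \<in> B} = (\<Sum>x\<in>B. \<pi> x)"
    using assms(4-6) \<open>A \<subseteq> S\<close> \<open>B \<subseteq> S\<close> measure_markov_chain_marginal[OF chain fin sd] by simp_all
  have nonneg: "\<And>x. x \<in> B \<Longrightarrow> 0 \<le> \<pi> x"
    using sd \<open>B \<subseteq> S\<close> unfolding stationary_distribution_def by blast
  have "\<bar>(\<Sum>x\<in>B. \<pi> x * (\<Sum>y\<in>A. mpow S P j x y)) - (\<Sum>x\<in>B. \<pi> x) * (\<Sum>y\<in>A. \<pi> y)\<bar>
      \<le> e * ((\<Sum>x\<in>B. \<pi> x) * (\<Sum>y\<in>A. \<pi> y))"
    using close \<open>A \<subseteq> S\<close> \<open>B \<subseteq> S\<close> by (intro sum_deviation_from_product_le nonneg) auto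
  then show "\<bar>measure M {\<omega>\<in>space M. Z (i + j) \<omega> \<in> A \<and> Z i \<omega> \<in> B}
      - measure M {\<omega>\<in>space M. Z (i + j) \<omega> \<in> A} * measure M {\<omega>\<in>space M. Z i \<omega> \<in> B}\<bar>
    \<le> e * (measure M {\<omega>\<in>space M. Z (i + j) \<omega> \<in> A} * measure M {\<omega>\<in>space M. Z i \<omega> \<in> B})"
    unfolding joint marginal by (simp only: mult.commute[of "sum \<pi> A"])
qed

lemma Psi_coeff_le:
  assumes "1 \<le> j" and "\<And>i. 1 \<le> i \<Longrightarrow> i + j \<le> n \<Longrightarrow> psi_coeff M S (Z (i + j)) (Z i) \<le> 1/4"
  shows "Psi_coeff M S n Z \<le> j"
  unfolding Psi_coeff_def using assms by (intro Least_le) auto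

lemma Min_stationary_distribution_bounds:
  assumes fin: "finite S" and ne: "S \<noteq> {}" and st: "stochastic_matrix S P"
    and irr: "irreducible_chain S P" and sd: "stationary_distribution S P \<pi>"
  shows "0 < Min (\<pi> ` S)" "Min (\<pi> ` S) \<le> 1"
proof -
  have pos: "0 < \<pi> y" if "y \<in> S" for y
    by (rule stationary_distribution_pos[OF fin st irr sd that])
  then show "0 < Min (\<pi> ` S)"
    using fin ne by (subst Min_gr_iff) auto
  obtain x where x: "x \<in> S"
    using ne by blast
  have "Min (\<pi> ` S) \<le> \<pi> x"
    using fin x by (intro Min_le) auto
  also have "\<dots> \<le> (\<Sum>y\<in>S. \<pi> y)"
    by (rule member_le_sum[OF x]) (use fin pos in \<open>auto intro: less_imp_le\<close>)
  finally show "Min (\<pi> ` S) \<le> 1"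
    using sd unfolding stationary_distribution_def by simp
qed

lemma exists_pow_half_le:
  fixes p :: real
  assumes "0 < p" "p \<le> 1"
  obtains k :: nat where "1 \<le> k" "real k \<le> log 2 (1 / p) + 3" "(1/2) ^ k \<le> p / 4"
proof
  let ?L = "log 2 (1 / p)"
  define k where "k = nat \<lceil>?L + 2\<rceil>"
  have "0 \<le> ?L"
    using assms by simp
  then have k_ge: "?L + 2 \<le> real k" and "real k \<le> ?L + 3"
    unfolding k_def by linarith+
  then show "1 \<le> k"
    using \<open>0 \<le> ?L\<close> by linarith
  show "real k \<le> ?L + 3" by fact
  have "4 / p = 2 powr (?L + 2)"
    using assms by (simp add: powr_add)
  also have "\<dots> \<le> 2 ^ k"
    using k_ge by (simp add: powr_realpow[symmetric])
  finally show "(1/2) ^ k \<le> p / 4"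
    using assms by (simp add: power_one_over field_simps)
qed

theorem propositionB:
  fixes M :: "'a measure" and S :: "'s set" and P :: "'s \<Rightarrow> 's \<Rightarrow> real"
    and \<pi> :: "'s \<Rightarrow> real" and n :: nat and Z :: "nat \<Rightarrow> 'a \<Rightarrow> 's"
  assumes "finite S" and "S \<noteq> {}"
    and "stochastic_matrix S P"
    and "ergodic_chain S P"
    and "stationary_distribution S P \<pi>"
    and "markov_chain_rvs M S P \<pi> n Z"
  shows "real (Psi_coeff M S n Z)
           \<le> (log 2 (1 / Min (\<pi> ` S)) + 3) * real (t_mix S P \<pi>)"
proof -
  note fin = assms(1) and chain = assms(6) and sd = assms(5)
  define T where "T = t_mix S P \<pi>"
  define p where "p = Min (\<pi> ` S)"
  have "irreducible_chain S P"
    using assms(4) unfolding ergodic_chain_def by blast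
  then have "0 < p" "p \<le> 1"
    unfolding p_def using Min_stationary_distribution_bounds assms(1-3,5) by blast+
  then obtain k where k: "1 \<le> k" "real k \<le> log 2 (1 / p) + 3" "(1/2) ^ k \<le> p / 4"
    by (rule exists_pow_half_le)
  have close: "\<bar>mpow S P (k * T) x y - \<pi> y\<bar> \<le> 1/4 * \<pi> y" if "x \<in> S" "y \<in> S" for x y
    using mpow_mult_t_mix_close[OF assms(1-5) that, of k] k(3) Min_le[OF _ imageI[OF that(2)], of \<pi>] fin
    unfolding T_def p_def by fastforce
  have "Psi_coeff M S n Z \<le> k * T"
  proof (rule Psi_coeff_le)
    show "1 \<le> k * T"
      using k(1) t_mix(1)[OF assms(1-5)] unfolding T_def by simp
    then show "psi_coeff M S (Z (i + k * T)) (Z i) \<le> 1/4" if "1 \<le> i" "i + k * T \<le> n" for i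
      using that by (intro psi_coeff_markov_chain_le[OF chain fin sd _ _ _ close])
  qed
  then have "real (Psi_coeff M S n Z) \<le> real k * real T"
    by (simp flip: of_nat_mult)
  also have "\<dots> \<le> (log 2 (1 / p) + 3) * real T"
    using k(2) by (intro mult_right_mono) auto
  finally show ?thesis
    unfolding p_def T_def .
qed

end
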